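(* In the setting described in the context, fix $n$ and a piecewise constant function $\bar u^n\colon\mathbb{R}\to\Omega^n$ (with finitely many jumps) and let $u^n$ be the approximate solution constructed from $\bar u^n$ by the wave-front tracking algorithm with the approximate Riemann solver $\mathcal{R}^n$. Then for every $t>0$, every phase transition performed by $x\mapsto u^n(t,x)$ from $u_-$ to $u_+$ satisfies $(u_-,u_+)\in\mathcal{G}_{\rm e}$. Moreover, the number of phase transitions performed by $x\mapsto u^n(t,x)$, $t\ge0$, does not increase with time, and it strictly decreases if and only if two phase transitions interact. Finally, the number of phase transitions can decrease only by an even number.
   Context: Standing assumptions. Let $R_{\rm f}''>0$ and $v_{\rm f}\in C^2([0,R_{\rm f}''];\mathbb{R}_+)$ with $v_{\rm f}(R_{\rm f}'')>0$ and, for every $\rho\in[0,R_{\rm f}'']$, $v_{\rm f}'(\rho)\le0$, $v_{\rm f}(\rho)+\rho v_{\rm f}'(\rho)>0$, $2v_{\rm f}'(\rho)+\rho v_{\rm f}''(\rho)\le0$. Let $R_{\rm f}'\in\,]0,R_{\rm f}''[$ and $p\in C^2([R_{\rm f}',+\infty[;\mathbb{R})$ with $p'(\rho)>0$, $2p'(\rho)+\rho p''(\rho)>0$ for $\rho\ge R_{\rm f}'$. Assume $\rho\mapsto v_{\rm f}(\rho)+p(\rho)$ is increasing on $[R_{\rm f}',R_{\rm f}'']$ and $v_{\rm f}(\rho)<\rho p'(\rho)$ on $[R_{\rm f}',R_{\rm f}'']$. Set $V_{\max}\doteq v_{\rm f}(0)$, $V_{\rm f}\doteq v_{\rm f}(R_{\rm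 f}'')$, $W_{\max}\doteq p(R_{\rm f}'')+V_{\rm f}$, $W_{\rm c}\doteq p(R_{\rm f}')+v_{\rm f}(R_{\rm f}')$, $W_{\min}\doteq W_{\rm c}+v_{\rm f}(R_{\rm f}')-V_{\max}$, $R_{\max}\doteq p^{-1}(W_{\max})$, and fix $V_{\rm c}\in\,]0,V_{\rm f}[$. Domains. Write $u=(\rho,v)$. $\Omega_{\rm f}\doteq\{u\in[0,R_{\rm f}'']\times[V_{\rm f},V_{\max}]: v=v_{\rm f}(\rho)\}$, $\Omega_{\rm c}\doteq\{u\in[0,R_{\max}]\times[0,V_{\rm c}]: W_{\rm c}\le v+p(\rho)\le W_{\max}\}$, $\Omega_{\rm f}'\doteq\{u\in\Omega_{\rm f}:\rho<R_{\rm f}'\}$, $\Omega_{\rm f}''\doteq\{u\in\Omega_{\rm f}:\rho\in[R_{\rm f}',R_{\rm f}'']\}$, $\Omega\doteq\Omega_{\rm f}\cup\Omega_{\rm c}$. For $w\in[W_{\rm c},W_{\max}]$, $\rho_{\rm f}(w)$ is the unique $\rho\in[R_{\rm f}',R_{\rm f}'']$ with $v_{\rm f}(\rho)+p(\rho)=w$. Extended Riemann invariants: $w_1(u)=v$ on $\Omega_{\rm c}$, $w_1(u)=V_{\rm f}$ on $\Omega_{\rm f}$; $w_2(u)=v+p(\rho)$ on $\Omega_{\rm c}\cup\Omega_{\rm f}''$, $w_2(u)=W_{\rm c}+v_{\rm f}(R_{\rm f}')-v_{\rm f}(\rho)$ on $\Omega_{\rm f}'$. For $\rho_-\ne\rho_+$,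 $\sigma(u_-,u_+)\doteq(\rho_+v_+-\rho_-v_-)/(\rho_+-\rho_-)$. The model is LWR $\rho_t+(\rho v_{\rm f}(\rho))_x=0$ in $\Omega_{\rm f}$ and ARZ ($\rho_t+(\rho v)_x=0$, $[\rho(v+p(\rho))]_t+[\rho(v+p(\rho))v]_x=0$) in $\Omega_{\rm c}$. A phase transition is a discontinuity between a state in $\Omega_{\rm f}$ and a state in $\Omega_{\rm c}$. $\mathcal{G}_{\rm e}\doteq\mathcal{G}_1\cup\mathcal{G}_2\cup\mathcal{G}_3$ with $\mathcal{G}_1\doteq\{(u_-,u_+)\in\Omega_{\rm f}'\times\Omega_{\rm c}:[w_2(u_+)-W_{\rm c}]\rho_-=0\}$, $\mathcal{G}_2\doteq\{(u_-,u_+)\in\Omega_{\rm f}''\times\Omega_{\rm c}:w_2(u_-)=w_2(u_+)\}$, $\mathcal{G}_3\doteq\{(u_-,u_+)\in\Omega_{\rm c}\times\Omega_{\rm f}'':w_2(u_-)=w_2(u_+),\ v_-=V_{\rm c}\}$. Riemann solver $\mathcal{R}$. $\mathcal{R}_{\rm LWR}[u_\ell,u_r]$ is the self-similar Lax solution of the LWR Riemann problem ($u_\ell,u_r\in\Omega_{\rm f}$); $\mathcal{R}_{\rm ARZ}[u_\ell,u_r]$ the self-similar Lax solution of the ARZ Riemann problem ($u_\ell,u_r\in\Omega_{\rm c}$). (R1) If both states lie in $\Omega_{\rm f}$ (resp. $\Omega_{\rm c}$), $\mathcal{R}=\mathcal{R}_{\rm LWR}$ (resp. $\mathcal{R}_{\rm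 ARZ}$). (R2) If $u_\ell\in\Omega_{\rm f}$, $u_r\in\Omega_{\rm c}$: $\mathcal{R}[u_\ell,u_r](x)=u_\ell$ for $x<\sigma(u_\ell,u_m)$, $=\mathcal{R}_{\rm ARZ}[u_m,u_r](x)$ for $x>\sigma(u_\ell,u_m)$, with $u_m=(p^{-1}(\max\{W_{\rm c},w_2(u_\ell)\}-v_r),v_r)$. (R3) If $u_\ell\in\Omega_{\rm c}$, $u_r\in\Omega_{\rm f}$: $\mathcal{R}[u_\ell,u_r](x)=\mathcal{R}_{\rm ARZ}[u_\ell,u_m'](x)$ for $x<\sigma(u_m',u_m'')$, $=\mathcal{R}_{\rm LWR}[u_m'',u_r](x)$ for $x>\sigma(u_m',u_m'')$, with $u_m'=(p^{-1}(w_2(u_\ell)-V_{\rm c}),V_{\rm c})$, $u_m''=(\rho_{\rm f}(w_2(u_\ell)),v_{\rm f}(\rho_{\rm f}(w_2(u_\ell))))$. Grid and approximate solver. $\varepsilon^n_v\doteq2^{-n}V_{\rm c}$, $\varepsilon^n_w\doteq2^{-n}(W_{\rm c}-W_{\min})$, $W^n\doteq\{W_{\min}+i\varepsilon^n_w:i=0,\dots,\lfloor(W_{\max}-W_{\min})/\varepsilon^n_w\rfloor\}$, $V^n\doteq\{i\varepsilon^n_v:i=0,\dots,2^n\}\cup\{V_{\rm f}\}$, $\Omega^n\doteq\{u\in\Omega:w_1(u)\in V^n,w_2(u)\in W^n\}$. $\mathcal{R}^n\colon\Omega^n\times\Omega^n\to L^1_{\rm loc}(\mathbb{R};\Omega^n)$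 is obtained from $\mathcal{R}$ by replacing every rarefaction fan by a discretized one: a rarefaction in $\Omega_{\rm f}$ from $u_\ell$ to $u_r$ with $w_2(u_r)=w_2(u_\ell)-j\varepsilon^n_w$ is replaced by jumps between consecutive states $u_0=u_\ell,u_1,\dots,u_j=u_r\in\Omega_{\rm f}\cap\Omega^n$ with $w_2(u_i)=w_2(u_\ell)-i\varepsilon^n_w$, the jump from $u_{i-1}$ to $u_i$ travelling with speed $\sigma(u_{i-1},u_i)$; a rarefaction in $\Omega_{\rm c}$ from $u_\ell$ to $u_r$ with $w_1(u_r)=w_1(u_\ell)+j\varepsilon^n_v$, $w_2(u_r)=w_2(u_\ell)$ is replaced likewise by jumps between $u_i\in\Omega_{\rm c}\cap\Omega^n$ with $w_1(u_i)=w_1(u_\ell)+i\varepsilon^n_v$, $w_2(u_i)=w_2(u_\ell)$; all other waves are kept. Wave-front tracking. Given piecewise constant $\bar u^n$ with values in $\Omega^n$, $u^n$ is built by solving with $\mathcal{R}^n$ the Riemann problem at each jump of $\bar u^n$ at $t=0$, letting each jump between $u_-,u_+$ travel along a straight line with speed $\sigma(u_-,u_+)$, and at each time two or more fronts meet solving with $\mathcal{R}^n$ the Riemann problem given by the states at the interaction point; $u^n$ is taken left continuous in time. *)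

theory Defs
  imports Complex_Main
begin

record prm =
  vf  :: "real \<Rightarrow> real"
  pr  :: "real \<Rightarrow> real"
  Rf1 :: real
  Rf2 :: real
  Vc  :: real

type_synonym state = "real \<times> real"   (* (rho, v) *)

definition Vmax :: "prm \<Rightarrow> real" where "Vmax P = vf P 0"
definition VF :: "prm \<Rightarrow> real" where "VF P = vf P (Rf2 P)"
definition Wmax :: "prm \<Rightarrow> real" where "Wmax P = pr P (Rf2 P) + VF P"
definition Wc :: "prm \<Rightarrow> real" where "Wc P = pr P (Rf1 P) + vf P (Rf1 P)"
definition Wmin :: "prm \<Rightarrow> real" where "Wmin P = Wc P + vf P (Rf1 P) - Vmax P"

definition pinv :: "prm \<Rightarrow> real \<Rightarrow> real" where
  "pinv P w = (THE r. Rf1 P \<le> r \<and> pr P r = w)"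

definition Rmax :: "prm \<Rightarrow> real" where "Rmax P = pinv P (Wmax P)"

definition standing :: "prm \<Rightarrow> bool" where
  "standing P \<longleftrightarrow>
     0 < Rf2 P \<and> 0 < Rf1 P \<and> Rf1 P < Rf2 P \<and>
     (\<exists>d1 d2 e1 e2.
        (\<forall>r\<in>{0..Rf2 P}. (vf P has_real_derivative d1 r) (at r within {0..Rf2 P})
                         \<and> (d1 has_real_derivative d2 r) (at r within {0..Rf2 P})) \<and>
        continuous_on {0..Rf2 P} d2 \<and>
        (\<forall>r\<in>{0..Rf2 P}. 0 \<le> vf P r \<and> d1 r \<le> 0 \<and> vf P r + r * d1 r > 0
                         \<and> 2 * d1 r + r * d2 r \<le> 0) \<and>
        (\<forall>r\<in>{Rf1 P..}. (pr P has_real_derivative e1 r) (at r within {Rf1 P..})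
                         \<and> (e1 has_real_derivative e2 r) (at r within {Rf1 P..})) \<and>
        continuous_on {Rf1 P..} e2 \<and>
        (\<forall>r\<in>{Rf1 P..}. e1 r > 0 \<and> 2 * e1 r + r * e2 r > 0) \<and>
        (\<forall>r\<in>{Rf1 P..Rf2 P}. vf P r < r * e1 r)) \<and>
     vf P (Rf2 P) > 0 \<and>
     strict_mono_on {Rf1 P..Rf2 P} (\<lambda>r. vf P r + pr P r) \<and>
     (\<exists>r\<ge>Rf1 P. pr P r = Wmax P) \<and>
     0 < Vc P \<and> Vc P < VF P"

definition Omega_f :: "prm \<Rightarrow> state set" where
  "Omega_f P = {(r, v). 0 \<le> r \<and> r \<le> Rf2 P \<and> VF P \<le> v \<and> v \<le> Vmax P \<and> v = vf P r}"

text \<open>p is only defined on [R_f', +infinity[, so states of Omega_c have rho >= R_f'.\<close>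
definition Omega_c :: "prm \<Rightarrow> state set" where
  "Omega_c P = {(r, v). Rf1 P \<le> r \<and> 0 \<le> r \<and> r \<le> Rmax P \<and> 0 \<le> v \<and> v \<le> Vc P
                       \<and> Wc P \<le> v + pr P r \<and> v + pr P r \<le> Wmax P}"

definition Omega_f1 :: "prm \<Rightarrow> state set" where
  "Omega_f1 P = {u \<in> Omega_f P. fst u < Rf1 P}"

definition Omega_f2 :: "prm \<Rightarrow> state set" where
  "Omega_f2 P = {u \<in> Omega_f P. Rf1 P \<le> fst u \<and> fst u \<le> Rf2 P}"

definition Omega :: "prm \<Rightarrow> state set" where
  "Omega P = Omega_f P \<union> Omega_c P"

definition rho_f :: "prm \<Rightarrow> real \<Rightarrow> real" where
  "rho_f P w = (THE r. Rf1 P \<le> r \<and> r \<le> Rf2 P \<and> vf P r + pr P r = w)"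

definition w1 :: "prm \<Rightarrow> state \<Rightarrow> real" where
  "w1 P u = (if u \<in> Omega_c P then snd u else VF P)"

definition w2 :: "prm \<Rightarrow> state \<Rightarrow> real" where
  "w2 P u = (if u \<in> Omega_f1 P then Wc P + vf P (Rf1 P) - vf P (fst u)
             else snd u + pr P (fst u))"

definition sigma :: "state \<Rightarrow> state \<Rightarrow> real" where
  "sigma um up = (fst up * snd up - fst um * snd um) / (fst up - fst um)"

definition G1 :: "prm \<Rightarrow> (state \<times> state) set" where
  "G1 P = {(um, up). um \<in> Omega_f1 P \<and> up \<in> Omega_c P \<and> (w2 P up - Wc P) * fst um = 0}"
definition G2 :: "prm \<Rightarrow> (state \<times> state) set" where
  "G2 P = {(um, up). um \<in> Omega_f2 P \<and> up \<in> Omega_c P \<and> w2 P um = w2 P up}"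
definition G3 :: "prm \<Rightarrow> (state \<times> state) set" where
  "G3 P = {(um, up). um \<in> Omega_c P \<and> up \<in> Omega_f2 P \<and> w2 P um = w2 P up \<and> snd um = Vc P}"
definition Ge :: "prm \<Rightarrow> (state \<times> state) set" where
  "Ge P = G1 P \<union> G2 P \<union> G3 P"

definition cross :: "prm \<Rightarrow> state \<Rightarrow> state \<Rightarrow> bool" where
  "cross P a b \<longleftrightarrow> (a \<in> Omega_f P \<and> b \<in> Omega_c P) \<or> (a \<in> Omega_c P \<and> b \<in> Omega_f P)"

definition eps_v :: "prm \<Rightarrow> nat \<Rightarrow> real" where "eps_v P n = Vc P / 2 ^ n"
definition eps_w :: "prm \<Rightarrow> nat \<Rightarrow> real" where "eps_w P n = (Wc P - Wmin P) / 2 ^ n"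

definition Wgrid :: "prm \<Rightarrow> nat \<Rightarrow> real set" where
  "Wgrid P n = {Wmin P + real i * eps_w P n | i.
                  i \<le> nat \<lfloor>(Wmax P - Wmin P) / eps_w P n\<rfloor>}"

definition Vgrid :: "prm \<Rightarrow> nat \<Rightarrow> real set" where
  "Vgrid P n = {real i * eps_v P n | i. i \<le> 2 ^ n} \<union> {VF P}"

definition Omega_n :: "prm \<Rightarrow> nat \<Rightarrow> state set" where
  "Omega_n P n = {u \<in> Omega P. w1 P u \<in> Vgrid P n \<and> w2 P u \<in> Wgrid P n}"

text \<open>A Riemann fan of R^n is encoded by the list of the successive constant states
  [u_0 = u_l, u_1, ..., u_m = u_r]; the jump from u_(i-1) to u_i travels with speed
  sigma u_(i-1) u_i.\<close>

text \<open>LWR (concave flux): rho_l < rho_r shock; rho_l > rho_r (discretized) rarefaction;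
  when no grid level lies strictly between (flux linear there) the Lax solution is a
  single contact jump, which is kept.\<close>
definition lwr_fan :: "prm \<Rightarrow> nat \<Rightarrow> state \<Rightarrow> state \<Rightarrow> state list \<Rightarrow> bool" where
  "lwr_fan P n ul ur L \<longleftrightarrow>
     (fst ul = fst ur \<and> L = [ul]) \<or>
     (fst ul < fst ur \<and> L = [ul, ur]) \<or>
     (fst ul > fst ur \<and>
        (let j = nat \<lfloor>(w2 P ul - w2 P ur) / eps_w P n\<rfloor> in
          (j = 0 \<and> L = [ul, ur]) \<or>
          (0 < j \<and> length L = Suc j \<and> L ! 0 = ul \<and> L ! j = ur \<and>
           (\<forall>i. 0 < i \<and> i < j \<longrightarrow>
               L ! i \<in> Omega_f P \<inter> Omega_n P n \<and> w2 P (L ! i) = w2 P ul - real i * eps_w P n))))"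

definition arz_mid :: "prm \<Rightarrow> state \<Rightarrow> state \<Rightarrow> state" where
  "arz_mid P ul ur = (pinv P (w2 P ul - snd ur), snd ur)"

text \<open>1-wave from ul to um (same w2): shock if v decreases, discretized rarefaction if v increases.\<close>
definition arz_1wave :: "prm \<Rightarrow> nat \<Rightarrow> state \<Rightarrow> state \<Rightarrow> state list" where
  "arz_1wave P n ul um =
     (if snd um < snd ul then [ul, um]
      else if snd um = snd ul then [ul]
      else map (\<lambda>i. (pinv P (w2 P ul - (snd ul + real i * eps_v P n)), snd ul + real i * eps_v P n))
               [0..<Suc (nat \<lfloor>(snd um - snd ul) / eps_v P n\<rfloor>)])"

text \<open>ARZ Lax solution: 1-wave ul -> um, then 2-contact um -> ur.\<close>
definition arz_fan :: "prm \<Rightarrow> nat \<Rightarrow> state \<Rightarrow> state \<Rightarrow> state list" where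
  "arz_fan P n ul ur =
     (let um = arz_mid P ul ur in arz_1wave P n ul um @ (if um = ur then [] else [ur]))"

definition Rn_sol :: "prm \<Rightarrow> nat \<Rightarrow> state \<Rightarrow> state \<Rightarrow> state list \<Rightarrow> bool" where
  "Rn_sol P n ul ur L \<longleftrightarrow>
     (ul \<in> Omega_f P \<and> ur \<in> Omega_f P \<and> lwr_fan P n ul ur L) \<or>
     (ul \<in> Omega_c P \<and> ur \<in> Omega_c P \<and> L = arz_fan P n ul ur) \<or>
     (ul \<in> Omega_f P \<and> ur \<in> Omega_c P \<and>
        L = ul # arz_fan P n (pinv P (max (Wc P) (w2 P ul) - snd ur), snd ur) ur) \<or>
     (ul \<in> Omega_c P \<and> ur \<in> Omega_f P \<and>
        (\<exists>L2. lwr_fan P n (rho_f P (w2 P ul), vf P (rho_f P (w2 P ul))) ur L2 \<and>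
              L = arz_fan P n ul (pinv P (w2 P ul - Vc P), Vc P) @ L2))"

text \<open>A front: (position at the reference time, left state, right state).\<close>
type_synonym front = "real \<times> state \<times> state"

definition fspeed :: "front \<Rightarrow> real" where
  "fspeed f = sigma (fst (snd f)) (snd (snd f))"

definition fpos :: "real \<Rightarrow> front \<Rightarrow> real \<Rightarrow> real" where
  "fpos t0 f t = fst f + fspeed f * (t - t0)"

definition isPT :: "prm \<Rightarrow> front \<Rightarrow> bool" where
  "isPT P f \<longleftrightarrow> cross P (fst (snd f)) (snd (snd f))"

definition fan_fronts :: "real \<Rightarrow> state list \<Rightarrow> front list" where
  "fan_fronts x L = map (\<lambda>i. (x, L ! i, L ! Suc i)) [0..<length L - 1]"

fun grp :: "('a \<Rightarrow> real) \<Rightarrow> 'a list \<Rightarrow> 'a list list" where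
  "grp X [] = []"
| "grp X (f # fs) =
     (case grp X fs of
        [] \<Rightarrow> [[f]]
      | g # gs \<Rightarrow> (if g \<noteq> [] \<and> X (hd g) = X f then (f # g) # gs else [f] # g # gs))"

text \<open>A group of coinciding fronts is an interaction iff not all of them travelled together
  (i.e. not all have the same speed).\<close>
definition interacting :: "front list \<Rightarrow> bool" where
  "interacting g \<longleftrightarrow> (\<exists>f\<in>set g. fspeed f \<noteq> fspeed (hd g))"

text \<open>Between t0 and t1 no two fronts meet (fronts travelling together forever are allowed).\<close>
definition no_cross :: "real \<Rightarrow> real \<Rightarrow> front list \<Rightarrow> bool" where
  "no_cross t0 t1 fs \<longleftrightarrow>
     (\<forall>i. Suc i < length fs \<longrightarrow>
        (\<forall>t. t0 < t \<and> t < t1 \<longrightarrow> fpos t0 (fs ! i) t < fpos t0 (fs ! Suc i) t) \<or>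
        (fst (fs ! i) = fst (fs ! Suc i) \<and> fspeed (fs ! i) = fspeed (fs ! Suc i)))"

text \<open>At time t1 every interaction is resolved by R^n with the outer states.\<close>
definition step_ok :: "prm \<Rightarrow> nat \<Rightarrow> real \<Rightarrow> real \<Rightarrow> front list \<Rightarrow> front list \<Rightarrow> bool" where
  "step_ok P n t0 t1 fs fs' \<longleftrightarrow>
     (let X = (\<lambda>f. fpos t0 f t1); gs = grp X fs in
      \<exists>Ls. length Ls = length gs \<and>
        (\<forall>i<length gs. interacting (gs ! i) \<longrightarrow>
            Rn_sol P n (fst (snd (hd (gs ! i)))) (snd (snd (last (gs ! i)))) (Ls ! i)) \<and>
        fs' = concat (map (\<lambda>i. if interacting (gs ! i)
                               then fan_fronts (X (hd (gs ! i))) (Ls ! i)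
                               else map (\<lambda>f. (X f, snd f)) (gs ! i)) [0..<length gs]))"

text \<open>Wave-front tracking approximation from initial datum with jump points ys and values vs:
  tau k are the (refined) interaction times, C k the fronts present on ]tau k, tau (k+1)]
  (left continuity in time), given by their positions at time tau k.\<close>
definition wft :: "prm \<Rightarrow> nat \<Rightarrow> real list \<Rightarrow> state list \<Rightarrow> (nat \<Rightarrow> real) \<Rightarrow> (nat \<Rightarrow> front list) \<Rightarrow> bool" where
  "wft P n ys vs tau C \<longleftrightarrow>
     tau 0 = 0 \<and> strict_mono tau \<and> filterlim tau at_top sequentially \<and>
     (\<exists>Ls. length Ls = length ys \<and>
        (\<forall>i<length ys. Rn_sol P n (vs ! i) (vs ! Suc i) (Ls ! i)) \<and>
        C 0 = concat (map (\<lambda>i. fan_fronts (ys ! i) (Ls ! i)) [0..<length ys])) \<and>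
     (\<forall>k. no_cross (tau k) (tau (Suc k)) (C k) \<and>
          step_ok P n (tau k) (tau (Suc k)) (C k) (C (Suc k)))"

definition fronts_at :: "(nat \<Rightarrow> real) \<Rightarrow> (nat \<Rightarrow> front list) \<Rightarrow> real \<Rightarrow> front list" where
  "fronts_at tau C t = C (LEAST k. t \<le> tau (Suc k))"

definition pc_jump :: "(real \<Rightarrow> state) \<Rightarrow> real \<Rightarrow> state \<Rightarrow> state \<Rightarrow> bool" where
  "pc_jump f x a b \<longleftrightarrow>
     (\<exists>d>0. \<forall>y. x - d < y \<and> y < x \<longrightarrow> f y = a) \<and>
     (\<exists>d>0. \<forall>y. x < y \<and> y < x + d \<longrightarrow> f y = b)"

definition NPT :: "prm \<Rightarrow> (real \<Rightarrow> state) \<Rightarrow> (nat \<Rightarrow> real) \<Rightarrow> (nat \<Rightarrow> front list) \<Rightarrow> real \<Rightarrow> nat" where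
  "NPT P ubar tau C t =
     (if t = 0 then card {x. \<exists>a b. pc_jump ubar x a b \<and> cross P a b}
      else length (filter (isPT P) (fronts_at tau C t)))"

definition PT_interact :: "prm \<Rightarrow> (nat \<Rightarrow> real) \<Rightarrow> (nat \<Rightarrow> front list) \<Rightarrow> real \<Rightarrow> bool" where
  "PT_interact P tau C t \<longleftrightarrow>
     (\<exists>k. tau (Suc k) = t \<and>
        (\<exists>g\<in>set (grp (\<lambda>f. fpos (tau k) f t) (C k)).
            interacting g \<and> 2 \<le> length (filter (isPT P) g)))"

end

theory Submission
  imports Defs
begin

text \<open>Every fan of the approximate solver \<open>R^n\<close> consists of at most two single-phase pieces, and
  the phase transition joining them lies in \<open>G_e\<close> by construction: a free-to-congested one enters
  \<open>Omega_c\<close> on the level \<open>w2 = max W_c (w2 u_l)\<close>, a congested-to-free one leaves from \<open>v = V_c\<close>.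
  Along a chain of fronts every phase transition switches the phase, so the parity of their
  number depends only on the two end states. At an interaction the outgoing fan has the same end
  states as the incoming group of fronts, hence at most one phase transition and the same parity:
  the count cannot increase, changes by an even number, and drops exactly when at least two
  phase transitions interact. Initially each fan contributes one phase transition exactly when
  the datum jumps between the two phases.\<close>

section \<open>Consequences of the standing assumptions\<close>

lemma standingD:
  assumes "standing P"
  shows "0 < Rf1 P" "Rf1 P < Rf2 P" "0 < Vc P" "Vc P < VF P"
    "strict_mono_on {Rf1 P..Rf2 P} (\<lambda>r. vf P r + pr P r)"
    "\<exists>r\<ge>Rf1 P. pr P r = Wmax P"
  using assms unfolding standing_def by auto

lemma pr_continuous_strict_mono:
  assumes "standing P"
  shows "continuous_on {Rf1 P..} (pr P)" "strict_mono_on {Rf1 P..} (pr P)"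
proof -
  from assms obtain e1 where
    D: "\<forall>r\<in>{Rf1 P..}. (pr P has_real_derivative e1 r) (at r within {Rf1 P..})"
    and pos: "\<forall>r\<in>{Rf1 P..}. e1 r > 0"
    unfolding standing_def by blast
  show c: "continuous_on {Rf1 P..} (pr P)"
    unfolding continuous_on_eq_continuous_within using D DERIV_continuous by blast
  show "strict_mono_on {Rf1 P..} (pr P)"
  proof (rule strict_mono_onI)
    fix x y assume xy: "x \<in> {Rf1 P..}" "y \<in> {Rf1 P..}" "x < y"
    show "pr P x < pr P y"
    proof (rule DERIV_pos_imp_increasing_open[OF \<open>x < y\<close>])
      fix z assume z: "x < z" "z < y"
      have "at z within {Rf1 P..} = at z"
        by (rule at_within_open_subset[of z "{Rf1 P<..}"]) (use z xy in auto)
      then show "\<exists>l. DERIV (pr P) z :> l \<and> l > 0"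
        using D pos z xy by (metis atLeast_iff less_imp_le order_trans)
    next
      show "continuous_on {x..y} (pr P)"
        by (rule continuous_on_subset[OF c]) (use xy in auto)
    qed
  qed
qed

lemma vf_continuous_antimono:
  assumes "standing P"
  shows "continuous_on {0..Rf2 P} (vf P)"
    and "\<And>x y. 0 \<le> x \<Longrightarrow> x \<le> y \<Longrightarrow> y \<le> Rf2 P \<Longrightarrow> vf P y \<le> vf P x"
proof -
  from assms obtain d1 where
    D: "\<forall>r\<in>{0..Rf2 P}. (vf P has_real_derivative d1 r) (at r within {0..Rf2 P})"
    and neg: "\<forall>r\<in>{0..Rf2 P}. d1 r \<le> 0"
    unfolding standing_def by blast
  show c: "continuous_on {0..Rf2 P} (vf P)"
    unfolding continuous_on_eq_continuous_within using D DERIV_continuous by blast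
  fix x y assume xy: "0 \<le> x" "x \<le> y" "y \<le> Rf2 P"
  show "vf P y \<le> vf P x"
  proof (rule DERIV_nonpos_imp_decreasing_open[OF \<open>x \<le> y\<close>])
    fix z assume z: "x < z" "z < y"
    have "at z within {0..Rf2 P} = at z"
      by (rule at_within_Icc_at) (use z xy in auto)
    then show "\<exists>l. DERIV (vf P) z :> l \<and> l \<le> 0"
      using D neg z xy by (metis atLeastAtMost_iff less_imp_le order_trans)
  next
    show "continuous_on {x..y} (vf P)"
      by (rule continuous_on_subset[OF c]) (use xy in auto)
  qed
qed

lemma VF_le_vf_Rf1: "standing P \<Longrightarrow> VF P \<le> vf P (Rf1 P)"
  unfolding VF_def using vf_continuous_antimono(2)[of P "Rf1 P" "Rf2 P"] standingD(1,2)[of P]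
  by auto

lemma pr_less: "standing P \<Longrightarrow> Rf1 P \<le> x \<Longrightarrow> x < y \<Longrightarrow> pr P x < pr P y"
  using pr_continuous_strict_mono(2)[of P] by (simp add: strict_mono_onD)

lemma pr_inj: "standing P \<Longrightarrow> Rf1 P \<le> x \<Longrightarrow> Rf1 P \<le> y \<Longrightarrow> pr P x = pr P y \<Longrightarrow> x = y"
  by (metis linorder_neq_iff order_less_irrefl pr_less)

lemma pinv_pr: "standing P \<Longrightarrow> Rf1 P \<le> r \<Longrightarrow> pinv P (pr P r) = r"
  unfolding pinv_def by (rule the_equality) (auto dest: pr_inj)

lemma pinv:
  assumes S: "standing P" and w: "pr P (Rf1 P) \<le> w" "w \<le> Wmax P"
  shows "Rf1 P \<le> pinv P w" "pr P (pinv P w) = w"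
proof -
  obtain rs where rs: "rs \<ge> Rf1 P" "pr P rs = Wmax P" using standingD(6)[OF S] by blast
  have "continuous_on {Rf1 P..rs} (pr P)"
    by (rule continuous_on_subset[OF pr_continuous_strict_mono(1)[OF S]]) auto
  then obtain r where r: "Rf1 P \<le> r" "pr P r = w"
    using IVT'[of "pr P" "Rf1 P" w rs] w rs by auto
  then show "Rf1 P \<le> pinv P w" "pr P (pinv P w) = w"
    using pinv_pr[OF S r(1)] by auto
qed

lemma pinv_le_Rmax:
  assumes S: "standing P" and w: "pr P (Rf1 P) \<le> w" "w \<le> Wmax P"
  shows "pinv P w \<le> Rmax P"
proof (rule ccontr)
  assume "\<not> ?thesis"
  moreover have "pr P (Rf1 P) \<le> Wmax P" using w by simp
  then have "Rf1 P \<le> Rmax P" "pr P (Rmax P) = Wmax P"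
    using pinv[OF S] unfolding Rmax_def by auto
  ultimately have "Wmax P < pr P (pinv P w)" using pr_less[OF S] by (metis not_le)
  then show False using pinv(2)[OF S w] w by simp
qed

lemma Wc_less_Wmax: "standing P \<Longrightarrow> Wc P < Wmax P"
  using standingD(1,2,5)[of P] unfolding Wc_def Wmax_def VF_def
  by (smt (verit) atLeastAtMost_iff strict_mono_onD)

lemma rho_f:
  assumes S: "standing P" and w: "Wc P \<le> w" "w \<le> Wmax P"
  shows "Rf1 P \<le> rho_f P w" "rho_f P w \<le> Rf2 P" "vf P (rho_f P w) + pr P (rho_f P w) = w"
proof -
  have "continuous_on {Rf1 P..Rf2 P} (\<lambda>r. vf P r + pr P r)"
    using continuous_on_subset[OF vf_continuous_antimono(1)[OF S], of "{Rf1 P..Rf2 P}"]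
      continuous_on_subset[OF pr_continuous_strict_mono(1)[OF S], of "{Rf1 P..Rf2 P}"]
      standingD(1)[OF S]
    by (auto intro: continuous_on_add)
  then obtain r where r: "Rf1 P \<le> r" "r \<le> Rf2 P" "vf P r + pr P r = w"
    using IVT'[of "\<lambda>r. vf P r + pr P r" "Rf1 P" w "Rf2 P"] w standingD(2)[OF S]
    unfolding Wc_def Wmax_def VF_def by auto
  have "inj_on (\<lambda>r. vf P r + pr P r) {Rf1 P..Rf2 P}"
    using standingD(5)[OF S] strict_mono_on_imp_inj_on by blast
  then have "rho_f P w = r"
    unfolding rho_f_def by (rule_tac the_equality) (use r in \<open>auto simp: inj_on_def\<close>)
  then show "Rf1 P \<le> rho_f P w" "rho_f P w \<le> Rf2 P" "vf P (rho_f P w) + pr P (rho_f P w) = w"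
    using r by auto
qed


lemma Omega_f_not_Omega_c: "standing P \<Longrightarrow> u \<in> Omega_f P \<Longrightarrow> u \<notin> Omega_c P"
  unfolding Omega_f_def Omega_c_def using standingD(4)[of P] by auto

lemma w2_Omega_c:
  assumes "standing P" "u \<in> Omega_c P"
  shows "w2 P u = snd u + pr P (fst u)" "Wc P \<le> w2 P u" "w2 P u \<le> Wmax P"
proof -
  have "u \<notin> Omega_f1 P" using Omega_f_not_Omega_c assms unfolding Omega_f1_def by blast
  then show "w2 P u = snd u + pr P (fst u)" "Wc P \<le> w2 P u" "w2 P u \<le> Wmax P"
    using assms(2) unfolding w2_def Omega_c_def by auto
qed

lemma Omega_f_cases: "u \<in> Omega_f P \<Longrightarrow> u \<in> Omega_f1 P \<or> u \<in> Omega_f2 P"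
  unfolding Omega_f1_def Omega_f2_def Omega_f_def by auto

lemma w2_Omega_f1: "standing P \<Longrightarrow> u \<in> Omega_f1 P \<Longrightarrow> w2 P u \<le> Wc P"
  using vf_continuous_antimono(2)[of P "fst u" "Rf1 P"] standingD(2)[of P]
  unfolding Omega_f1_def Omega_f_def w2_def by auto

lemma w2_Omega_f2:
  assumes S: "standing P" and u: "u \<in> Omega_f2 P"
  shows "w2 P u = snd u + pr P (fst u)" "Wc P \<le> w2 P u" "w2 P u \<le> Wmax P"
proof -
  have r: "Rf1 P \<le> fst u" "fst u \<le> Rf2 P" "snd u = vf P (fst u)"
    using u unfolding Omega_f2_def Omega_f_def by auto
  have "u \<notin> Omega_f1 P" using u unfolding Omega_f1_def Omega_f2_def by auto
  then show "w2 P u = snd u + pr P (fst u)" unfolding w2_def by simp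
  show "Wc P \<le> w2 P u" "w2 P u \<le> Wmax P"
    unfolding \<open>w2 P u = _\<close> Wc_def Wmax_def VF_def using r standingD(2,5)[OF S]
    by (smt (verit) atLeastAtMost_iff strict_mono_onD)+
qed

text \<open>The congested state with Riemann invariants \<open>w1 = v\<close> and \<open>w2 = w\<close>.\<close>
definition c_state :: "prm \<Rightarrow> real \<Rightarrow> real \<Rightarrow> state" where
  "c_state P w v = (pinv P (w - v), v)"

lemma c_state:
  assumes S: "standing P" and w: "Wc P \<le> w" "w \<le> Wmax P" and v: "0 \<le> v" "v \<le> Vc P"
  shows "c_state P w v \<in> Omega_c P" "w2 P (c_state P w v) = w"
proof -
  have "pr P (Rf1 P) \<le> w - v" "w - v \<le> Wmax P"
    using w v VF_le_vf_Rf1[OF S] standingD(4)[OF S] unfolding Wc_def by linarith+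
  then have r: "Rf1 P \<le> pinv P (w - v)" "pr P (pinv P (w - v)) = w - v"
    "pinv P (w - v) \<le> Rmax P"
    using pinv[OF S] pinv_le_Rmax[OF S] by auto
  show c: "c_state P w v \<in> Omega_c P"
    unfolding c_state_def Omega_c_def using r w v standingD(1)[OF S] by auto
  show "w2 P (c_state P w v) = w"
    using w2_Omega_c(1)[OF S c] r unfolding c_state_def by auto
qed

lemma c_state_w2_snd: "standing P \<Longrightarrow> u \<in> Omega_c P \<Longrightarrow> c_state P (w2 P u) (snd u) = u"
  using w2_Omega_c(1)[of P u] pinv_pr[of P "fst u"] unfolding c_state_def Omega_c_def
  by (cases u) auto

definition on_v_grid :: "prm \<Rightarrow> nat \<Rightarrow> real \<Rightarrow> bool" where
  "on_v_grid P n v \<longleftrightarrow> (\<exists>i\<le>2 ^ n. v = real i * eps_v P n)"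

definition grid_c_state :: "prm \<Rightarrow> nat \<Rightarrow> state \<Rightarrow> bool" where
  "grid_c_state P n u \<longleftrightarrow> u \<in> Omega_c P \<and> on_v_grid P n (snd u)"

text \<open>Weaker than membership in \<open>Omega_n\<close> (free states need not lie on the \<open>w2\<close>-grid), which is
  all the argument needs.\<close>
definition grid_state :: "prm \<Rightarrow> nat \<Rightarrow> state \<Rightarrow> bool" where
  "grid_state P n u \<longleftrightarrow> u \<in> Omega_f P \<or> grid_c_state P n u"

lemma eps_v_pos: "standing P \<Longrightarrow> 0 < eps_v P n"
  unfolding eps_v_def using standingD(3)[of P] by auto

lemma on_v_grid_bounds:
  assumes S: "standing P" and g: "on_v_grid P n v"
  shows "0 \<le> v" "v \<le> Vc P"
proof -
  obtain i where i: "i \<le> 2 ^ n" "v = real i * eps_v P n" using g unfolding on_v_grid_def by auto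
  have "real i * (Vc P / 2 ^ n) \<le> 2 ^ n * (Vc P / 2 ^ n)"
    by (rule mult_right_mono) (use i standingD(3)[OF S] in \<open>auto simp: of_nat_le_iff[symmetric]\<close>)
  then show "0 \<le> v" "v \<le> Vc P" using i standingD(3)[OF S] unfolding eps_v_def by auto
qed

lemma on_v_grid_Vc: "on_v_grid P n (Vc P)"
  unfolding on_v_grid_def eps_v_def by (intro exI[of _ "2 ^ n"]) auto

lemma grid_c_state_c_state:
  "standing P \<Longrightarrow> Wc P \<le> w \<Longrightarrow> w \<le> Wmax P \<Longrightarrow> on_v_grid P n v \<Longrightarrow> grid_c_state P n (c_state P w v)"
  using c_state(1) on_v_grid_bounds unfolding grid_c_state_def c_state_def by fastforce

lemma grid_state_Omega_n: "standing P \<Longrightarrow> u \<in> Omega_n P n \<Longrightarrow> grid_state P n u"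
  using standingD(4)[of P]
  unfolding Omega_n_def Omega_def grid_state_def grid_c_state_def w1_def Vgrid_def on_v_grid_def
    Omega_c_def
  by auto

definition state_path :: "(state \<Rightarrow> bool) \<Rightarrow> state \<Rightarrow> state list \<Rightarrow> state \<Rightarrow> bool" where
  "state_path Q a L b \<longleftrightarrow> L \<noteq> [] \<and> hd L = a \<and> last L = b \<and> (\<forall>u\<in>set L. Q u)"

lemma state_path_singleton: "Q a \<Longrightarrow> state_path Q a [a] a"
  unfolding state_path_def by simp

lemma arz_1wave_grid:
  assumes S: "standing P" and a: "grid_c_state P n a" and v: "on_v_grid P n v"
  shows "state_path (grid_c_state P n) a (arz_1wave P n a (c_state P (w2 P a) v)) (c_state P (w2 P a) v)"
proof -
  let ?c = "\<lambda>v. c_state P (w2 P a) v"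
  have ac: "a \<in> Omega_c P" and ga: "on_v_grid P n (snd a)" using a unfolding grid_c_state_def by auto
  have w: "Wc P \<le> w2 P a" "w2 P a \<le> Wmax P" using w2_Omega_c[OF S ac] by auto
  have snd_c: "snd (?c v) = v" unfolding c_state_def by simp
  have gc: "grid_c_state P n (?c v)" using grid_c_state_c_state[OF S w v] .
  have ca: "?c (snd a) = a" by (rule c_state_w2_snd[OF S ac])
  consider "v < snd a" | "v = snd a" | "snd a < v" by linarith
  then show ?thesis
  proof cases
    case 1 then show ?thesis using a gc unfolding arz_1wave_def snd_c state_path_def by auto
  next
    case 2 then show ?thesis using a ca unfolding arz_1wave_def snd_c state_path_def by auto
  next
    case 3
    obtain ia where ia: "ia \<le> 2 ^ n" "snd a = real ia * eps_v P n" using ga unfolding on_v_grid_def by auto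
    obtain ib where ib: "ib \<le> 2 ^ n" "v = real ib * eps_v P n" using v unfolding on_v_grid_def by auto
    have ep: "eps_v P n > 0" by (rule eps_v_pos[OF S])
    have iab: "ia < ib" using 3 ia ib ep by (simp add: mult_less_cancel_right)
    define m where "m = ib - ia"
    have m: "(v - snd a) / eps_v P n = real m"
      using ia ib ep iab unfolding m_def by (simp add: of_nat_diff field_simps)
    have steps: "snd a + real i * eps_v P n = real (ia + i) * eps_v P n" for i
      using ia by (simp add: algebra_simps)
    have L: "arz_1wave P n a (?c v) = map (\<lambda>i. ?c (snd a + real i * eps_v P n)) [0..<Suc m]"
      using 3 unfolding arz_1wave_def snd_c m by (simp add: c_state_def)
    have "grid_c_state P n (?c (snd a + real i * eps_v P n))" if "i \<le> m" for i
      by (rule grid_c_state_c_state[OF S w])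
        (use that ib iab in \<open>auto simp: on_v_grid_def m_def steps intro!: exI[of _ "ia + i"]\<close>)
    moreover have "snd a + real m * eps_v P n = v"
      using ia ib iab unfolding m_def by (simp add: of_nat_diff algebra_simps)
    ultimately show ?thesis
      unfolding L state_path_def using ca by (auto simp: hd_map last_map simp del: upt_Suc)
  qed
qed

lemma arz_fan_grid:
  assumes S: "standing P" and a: "grid_c_state P n a" and b: "grid_c_state P n b"
  shows "state_path (grid_c_state P n) a (arz_fan P n a b) b"
proof -
  have "arz_mid P a b = c_state P (w2 P a) (snd b)" unfolding arz_mid_def c_state_def by simp
  then show ?thesis
    using arz_1wave_grid[OF S a, of "snd b"] b unfolding arz_fan_def Let_def state_path_def grid_c_state_def
    by auto
qed

lemma lwr_fan_Omega_f:
  assumes a: "a \<in> Omega_f P" and b: "b \<in> Omega_f P" and L: "lwr_fan P n a b L"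
  shows "state_path (\<lambda>u. u \<in> Omega_f P) a L b"
proof -
  have eq: "fst a = fst b \<Longrightarrow> a = b" using a b unfolding Omega_f_def by (cases a, cases b) auto
  from L consider "fst a = fst b \<and> L = [a]" | "L = [a, b]"
    | j where "0 < j" "length L = Suc j" "L ! 0 = a" "L ! j = b"
       "\<forall>i. 0 < i \<and> i < j \<longrightarrow> L ! i \<in> Omega_f P \<inter> Omega_n P n"
    unfolding lwr_fan_def Let_def by metis
  then show ?thesis
  proof cases
    case 1 then show ?thesis using eq a unfolding state_path_def by auto
  next
    case 2 then show ?thesis using a b unfolding state_path_def by auto
  next
    case 3
    have ne: "L \<noteq> []" using 3 by auto
    have "L ! i \<in> Omega_f P" if "i < Suc j" for i
      using 3 a b that by (cases "i = 0 \<or> i = j") auto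
    then have "\<forall>u\<in>set L. u \<in> Omega_f P" using 3 by (metis in_set_conv_nth)
    then show ?thesis
      using 3 ne unfolding state_path_def by (auto simp: hd_conv_nth last_conv_nth)
  qed
qed

section \<open>Chains of fronts and phase transitions\<close>

fun front_chain :: "state \<Rightarrow> front list \<Rightarrow> state \<Rightarrow> bool" where
  "front_chain a [] b \<longleftrightarrow> a = b"
| "front_chain a (f # fs) b \<longleftrightarrow> fst (snd f) = a \<and> front_chain (snd (snd f)) fs b"

lemma front_chain_append:
  "front_chain a (xs @ ys) b \<longleftrightarrow> (\<exists>c. front_chain a xs c \<and> front_chain c ys b)"
  by (induction xs arbitrary: a) auto

lemma front_chain_ends:
  "front_chain a fs b \<Longrightarrow> fs \<noteq> [] \<Longrightarrow> a = fst (snd (hd fs)) \<and> b = snd (snd (last fs))"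
proof (induction fs arbitrary: a)
  case (Cons f fs) then show ?case by (cases fs) auto
qed simp

lemma front_chain_move:
  "front_chain a (map (\<lambda>f. (X f, snd f)) fs) b \<longleftrightarrow> front_chain a fs b"
  by (induction fs arbitrary: a) auto

lemma fan_fronts_Nil [simp]: "fan_fronts x [] = []"
  and fan_fronts_singleton [simp]: "fan_fronts x [a] = []"
  unfolding fan_fronts_def by auto

lemma fan_fronts_Cons_Cons [simp]:
  "fan_fronts x (a # b # L) = (x, a, b) # fan_fronts x (b # L)"
proof -
  have "[0..<length (a # b # L) - 1] = 0 # map Suc [0..<length (b # L) - 1]"
    by (simp add: upt_conv_Cons map_Suc_upt del: upt_Suc)
  then show ?thesis unfolding fan_fronts_def by simp
qed

lemma front_chain_fan_fronts: "L \<noteq> [] \<Longrightarrow> front_chain (hd L) (fan_fronts x L) (last L)"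
proof (induction L)
  case (Cons a L) then show ?case by (cases L) auto
qed simp

lemma fan_fronts_states:
  "f \<in> set (fan_fronts x L) \<Longrightarrow> fst (snd f) \<in> set L \<and> snd (snd f) \<in> set L"
  by (induction L rule: induct_list012) auto

lemma fan_fronts_append:
  "L1 \<noteq> [] \<Longrightarrow> L2 \<noteq> [] \<Longrightarrow>
   fan_fronts x (L1 @ L2) = fan_fronts x L1 @ (x, last L1, hd L2) # fan_fronts x L2"
proof (induction L1 rule: induct_list012)
  case (2 a) then show ?case by (cases L2) auto
qed auto

definition pt_count :: "prm \<Rightarrow> front list \<Rightarrow> nat" where
  "pt_count P fs = length (filter (isPT P) fs)"

lemma pt_count_append [simp]: "pt_count P (xs @ ys) = pt_count P xs + pt_count P ys"
  by (simp add: pt_count_def)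

lemma cross_iff_phases_differ:
  "standing P \<Longrightarrow> grid_state P n a \<Longrightarrow> grid_state P n b \<Longrightarrow>
   cross P a b \<longleftrightarrow> (a \<in> Omega_c P) \<noteq> (b \<in> Omega_c P)"
  unfolding cross_def grid_state_def grid_c_state_def using Omega_f_not_Omega_c by blast

lemma odd_pt_count_iff_cross:
  assumes S: "standing P"
  shows "front_chain a fs b \<Longrightarrow> \<forall>f\<in>set fs. grid_state P n (snd (snd f)) \<Longrightarrow>
    grid_state P n a \<Longrightarrow> grid_state P n b \<Longrightarrow> odd (pt_count P fs) \<longleftrightarrow> cross P a b"
proof (induction fs arbitrary: a)
  case Nil then show ?case using cross_iff_phases_differ[OF S] by (simp add: pt_count_def)
next
  case (Cons f fs)
  let ?c = "snd (snd f)"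
  have c: "grid_state P n ?c" using Cons.prems by auto
  have "odd (pt_count P fs) \<longleftrightarrow> cross P ?c b" using Cons c by auto
  moreover have "isPT P f \<longleftrightarrow> cross P a ?c" using Cons.prems unfolding isPT_def by auto
  ultimately show ?case
    using cross_iff_phases_differ[OF S] Cons.prems(3,4) c by (auto simp: pt_count_def)
qed

definition admissible_chain :: "prm \<Rightarrow> nat \<Rightarrow> state \<Rightarrow> front list \<Rightarrow> state \<Rightarrow> bool" where
  "admissible_chain P n a fs b \<longleftrightarrow> front_chain a fs b
     \<and> (\<forall>f\<in>set fs. grid_state P n (fst (snd f)) \<and> grid_state P n (snd (snd f)))
     \<and> (\<forall>f\<in>set fs. isPT P f \<longrightarrow> (fst (snd f), snd (snd f)) \<in> Ge P)"

lemma admissible_chain_append: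
  "admissible_chain P n a (xs @ ys) b \<longleftrightarrow>
   (\<exists>c. admissible_chain P n a xs c \<and> admissible_chain P n c ys b)"
  unfolding admissible_chain_def front_chain_append by auto

lemma odd_pt_count_admissible_chain:
  "standing P \<Longrightarrow> admissible_chain P n a fs b \<Longrightarrow> grid_state P n a \<Longrightarrow> grid_state P n b \<Longrightarrow>
   odd (pt_count P fs) \<longleftrightarrow> cross P a b"
  using odd_pt_count_iff_cross unfolding admissible_chain_def by blast

section \<open>Fronts created by the approximate Riemann solver\<close>

definition single_phase_path :: "prm \<Rightarrow> nat \<Rightarrow> state \<Rightarrow> state list \<Rightarrow> state \<Rightarrow> bool" where
  "single_phase_path P n a L b \<longleftrightarrow> state_path (grid_state P n) a L b
     \<and> ((\<forall>u\<in>set L. u \<in> Omega_f P) \<or> (\<forall>u\<in>set L. u \<in> Omega_c P))"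

lemma single_phase_path_lwr_fan:
  "a \<in> Omega_f P \<Longrightarrow> b \<in> Omega_f P \<Longrightarrow> lwr_fan P n a b L \<Longrightarrow> single_phase_path P n a L b"
  using lwr_fan_Omega_f unfolding single_phase_path_def state_path_def grid_state_def by blast

lemma single_phase_path_arz_fan:
  "standing P \<Longrightarrow> grid_c_state P n a \<Longrightarrow> grid_c_state P n b \<Longrightarrow>
   single_phase_path P n a (arz_fan P n a b) b"
  using arz_fan_grid unfolding single_phase_path_def state_path_def grid_state_def grid_c_state_def
  by blast

lemma not_isPT_single_phase:
  "standing P \<Longrightarrow> single_phase_path P n a L b \<Longrightarrow> f \<in> set (fan_fronts x L) \<Longrightarrow> \<not> isPT P f"
  unfolding single_phase_path_def isPT_def cross_def
  using fan_fronts_states[of f x L] Omega_f_not_Omega_c by metis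

lemma admissible_fan_single_phase:
  assumes S: "standing P" and L: "single_phase_path P n a L b"
  shows "admissible_chain P n a (fan_fronts x L) b" "pt_count P (fan_fronts x L) = 0"
  using L front_chain_fan_fronts[of L x] fan_fronts_states[of _ x L] not_isPT_single_phase[OF S L]
  unfolding admissible_chain_def single_phase_path_def state_path_def pt_count_def
  by (auto simp: filter_empty_conv)

lemma admissible_fan_two_phases:
  assumes S: "standing P"
    and L1: "single_phase_path P n a L1 c" and L2: "single_phase_path P n d L2 b"
    and cd: "(c, d) \<in> Ge P"
  shows "admissible_chain P n a (fan_fronts x (L1 @ L2)) b" "pt_count P (fan_fronts x (L1 @ L2)) \<le> 1"
proof -
  have ne: "L1 \<noteq> []" "L2 \<noteq> []" and ends: "last L1 = c" "hd L2 = d"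
    using L1 L2 unfolding single_phase_path_def state_path_def by auto
  then have e: "fan_fronts x (L1 @ L2) = fan_fronts x L1 @ (x, c, d) # fan_fronts x L2"
    using fan_fronts_append by metis
  have "grid_state P n c" "grid_state P n d"
    using L1 L2 ne ends unfolding single_phase_path_def state_path_def by auto
  then have "admissible_chain P n c [(x, c, d)] d"
    using cd unfolding admissible_chain_def by simp
  then have "admissible_chain P n c ((x, c, d) # fan_fronts x L2) b"
    using admissible_fan_single_phase(1)[OF S L2]
      admissible_chain_append[of P n c "[(x, c, d)]" "fan_fronts x L2" b]
    by (metis append_Cons append_Nil)
  then show "admissible_chain P n a (fan_fronts x (L1 @ L2)) b"
    unfolding e using admissible_fan_single_phase(1)[OF S L1] admissible_chain_append by blast
  show "pt_count P (fan_fronts x (L1 @ L2)) \<le> 1"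
    unfolding e using admissible_fan_single_phase(2)[OF S L1] admissible_fan_single_phase(2)[OF S L2]
    by (simp add: pt_count_def)
qed

lemma max_Wc_w2_le_Wmax: "standing P \<Longrightarrow> a \<in> Omega_f P \<Longrightarrow> max (Wc P) (w2 P a) \<le> Wmax P"
  using Omega_f_cases[of a P] w2_Omega_f1[of P a] w2_Omega_f2(3)[of P a] Wc_less_Wmax[of P]
  by (auto simp: max_def)

lemma free_to_congested_Ge:
  assumes S: "standing P" and a: "a \<in> Omega_f P" and v: "0 \<le> v" "v \<le> Vc P"
  shows "(a, c_state P (max (Wc P) (w2 P a)) v) \<in> Ge P"
proof -
  let ?c = "c_state P (max (Wc P) (w2 P a)) v"
  have c: "?c \<in> Omega_c P" "w2 P ?c = max (Wc P) (w2 P a)"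
    using c_state[OF S _ max_Wc_w2_le_Wmax[OF S a] v] by auto
  from Omega_f_cases[OF a] show ?thesis
  proof
    assume "a \<in> Omega_f1 P"
    then show ?thesis using c w2_Omega_f1[OF S] unfolding Ge_def G1_def by auto
  next
    assume "a \<in> Omega_f2 P"
    then show ?thesis using c w2_Omega_f2(2)[OF S] unfolding Ge_def G2_def by auto
  qed
qed

lemma congested_to_free_Ge:
  assumes S: "standing P" and a: "a \<in> Omega_c P"
  defines "m \<equiv> (rho_f P (w2 P a), vf P (rho_f P (w2 P a)))"
  shows "m \<in> Omega_f2 P" "(c_state P (w2 P a) (Vc P), m) \<in> Ge P"
proof -
  have w: "Wc P \<le> w2 P a" "w2 P a \<le> Wmax P" using w2_Omega_c[OF S a] by auto
  have r: "Rf1 P \<le> fst m" "fst m \<le> Rf2 P" "snd m = vf P (fst m)" "snd m + pr P (fst m) = w2 P a"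
    using rho_f[OF S w] unfolding m_def by auto
  then show m: "m \<in> Omega_f2 P"
    using vf_continuous_antimono(2)[OF S, of 0 "fst m"] vf_continuous_antimono(2)[OF S, of "fst m" "Rf2 P"]
      standingD(1)[OF S]
    unfolding Omega_f2_def Omega_f_def Vmax_def VF_def by (cases m) auto
  show "(c_state P (w2 P a) (Vc P), m) \<in> Ge P"
    using c_state[OF S w _ order.refl] standingD(3)[OF S] w2_Omega_f2(1)[OF S m] r m
    unfolding Ge_def G3_def c_state_def by auto
qed

lemma Rn_sol_admissible:
  assumes S: "standing P" and a: "grid_state P n a" and b: "grid_state P n b"
    and R: "Rn_sol P n a b L"
  shows "admissible_chain P n a (fan_fronts x L) b \<and> pt_count P (fan_fronts x L) \<le> 1"
proof -
  have grid_c: "grid_c_state P n u" if "grid_state P n u" "u \<in> Omega_c P" for u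
    using that Omega_f_not_Omega_c[OF S] unfolding grid_state_def by blast
  from R consider
      (FF) "a \<in> Omega_f P" "b \<in> Omega_f P" "lwr_fan P n a b L"
    | (CC) "a \<in> Omega_c P" "b \<in> Omega_c P" "L = arz_fan P n a b"
    | (FC) "a \<in> Omega_f P" "b \<in> Omega_c P"
         "L = [a] @ arz_fan P n (c_state P (max (Wc P) (w2 P a)) (snd b)) b"
    | (CF) L2 where "a \<in> Omega_c P" "b \<in> Omega_f P"
         "lwr_fan P n (rho_f P (w2 P a), vf P (rho_f P (w2 P a))) b L2"
         "L = arz_fan P n a (c_state P (w2 P a) (Vc P)) @ L2"
    unfolding Rn_sol_def c_state_def by auto
  then show ?thesis
  proof cases
    case FF
    then show ?thesis using admissible_fan_single_phase[OF S single_phase_path_lwr_fan] by simp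
  next
    case CC
    then show ?thesis
      using admissible_fan_single_phase[OF S single_phase_path_arz_fan[OF S grid_c grid_c]] a b by simp
  next
    case FC
    let ?c = "c_state P (max (Wc P) (w2 P a)) (snd b)"
    have gb: "grid_c_state P n b" using grid_c b FC by blast
    then have v: "0 \<le> snd b" "snd b \<le> Vc P" using on_v_grid_bounds[OF S] unfolding grid_c_state_def by auto
    have "grid_c_state P n ?c"
      using grid_c_state_c_state[OF S _ max_Wc_w2_le_Wmax[OF S FC(1)]] gb
      unfolding grid_c_state_def by auto
    moreover have "single_phase_path P n a [a] a"
      using FC(1) a unfolding single_phase_path_def by (simp add: state_path_singleton)
    ultimately show ?thesis
      using admissible_fan_two_phases[OF S _ single_phase_path_arz_fan[OF S _ gb] free_to_congested_Ge[OF S FC(1) v]]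
      unfolding FC(3) by blast
  next
    case CF
    let ?m1 = "c_state P (w2 P a) (Vc P)" and ?m2 = "(rho_f P (w2 P a), vf P (rho_f P (w2 P a)))"
    have "Wc P \<le> w2 P a" "w2 P a \<le> Wmax P" using w2_Omega_c[OF S CF(1)] by auto
    then have "grid_c_state P n ?m1" using grid_c_state_c_state[OF S _ _ on_v_grid_Vc] by blast
    moreover have "?m2 \<in> Omega_f P"
      using congested_to_free_Ge(1)[OF S CF(1)] unfolding Omega_f2_def by auto
    ultimately show ?thesis
      using admissible_fan_two_phases[OF S single_phase_path_arz_fan[OF S grid_c[OF a CF(1)]]
          single_phase_path_lwr_fan[OF _ CF(2,3)] congested_to_free_Ge(2)[OF S CF(1)]]
      unfolding CF(4) by blast
  qed
qed

section \<open>Interactions\<close>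

definition admissible_replacement :: "prm \<Rightarrow> nat \<Rightarrow> front list \<Rightarrow> front list \<Rightarrow> bool" where
  "admissible_replacement P n g h \<longleftrightarrow> (\<forall>a b. admissible_chain P n a g b \<longrightarrow>
     admissible_chain P n a h b \<and> pt_count P h \<le> pt_count P g
     \<and> (odd (pt_count P h) \<longleftrightarrow> odd (pt_count P g))
     \<and> (pt_count P h < pt_count P g \<longleftrightarrow> interacting g \<and> 2 \<le> pt_count P g))"

lemma admissible_replacement_moved:
  assumes "\<not> interacting g"
  shows "admissible_replacement P n g (map (\<lambda>f. (X f, snd f)) g)"
proof -
  have "pt_count P (map (\<lambda>f. (X f, snd f)) g) = pt_count P g"
    unfolding pt_count_def by (induction g) (auto simp: isPT_def)
  moreover have "admissible_chain P n a (map (\<lambda>f. (X f, snd f)) g) b = admissible_chain P n a g b"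
    for a b
    unfolding admissible_chain_def front_chain_move by (auto simp: isPT_def)
  ultimately show ?thesis using assms unfolding admissible_replacement_def by auto
qed

text \<open>The outgoing fan has at most one phase transition, and by the parity lemma it has one
  exactly when the incoming group has an odd number of them.\<close>
lemma admissible_replacement_Rn_sol:
  assumes S: "standing P" and i: "interacting g"
    and R: "Rn_sol P n (fst (snd (hd g))) (snd (snd (last g))) L"
  shows "admissible_replacement P n g (fan_fronts x L)"
  unfolding admissible_replacement_def
proof (intro allI impI)
  fix a b assume g: "admissible_chain P n a g b"
  have "g \<noteq> []" using i unfolding interacting_def by auto
  then have ab: "a = fst (snd (hd g))" "b = snd (snd (last g))"
    and grid: "grid_state P n a" "grid_state P n b"
    using front_chain_ends[of a g b] g hd_in_set last_in_set unfolding admissible_chain_def by auto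
  have h: "admissible_chain P n a (fan_fronts x L) b" "pt_count P (fan_fronts x L) \<le> 1"
    using Rn_sol_admissible[OF S grid R[folded ab]] by auto
  have "odd (pt_count P (fan_fronts x L)) \<longleftrightarrow> odd (pt_count P g)"
    using odd_pt_count_admissible_chain[OF S _ grid] g h(1) by blast
  then show "admissible_chain P n a (fan_fronts x L) b \<and> pt_count P (fan_fronts x L) \<le> pt_count P g \<and>
      (odd (pt_count P (fan_fronts x L)) \<longleftrightarrow> odd (pt_count P g)) \<and>
      (pt_count P (fan_fronts x L) < pt_count P g \<longleftrightarrow> interacting g \<and> 2 \<le> pt_count P g)"
    using h i by (cases "pt_count P (fan_fronts x L)") (auto, presburger+)
qed

lemma admissible_replacement_concat:
  assumes "list_all2 (admissible_replacement P n) gs hs" and "admissible_chain P n a (concat gs) b"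
  shows "admissible_chain P n a (concat hs) b \<and> pt_count P (concat hs) \<le> pt_count P (concat gs)
     \<and> (odd (pt_count P (concat hs)) \<longleftrightarrow> odd (pt_count P (concat gs)))
     \<and> (pt_count P (concat hs) < pt_count P (concat gs) \<longleftrightarrow>
          (\<exists>g\<in>set gs. interacting g \<and> 2 \<le> pt_count P g))"
  using assms
proof (induction gs arbitrary: hs a)
  case (Cons g gs)
  then obtain h hs' where hs: "hs = h # hs'" "admissible_replacement P n g h"
    "list_all2 (admissible_replacement P n) gs hs'"
    by (cases hs) auto
  from Cons.prems(2) obtain c where c: "admissible_chain P n a g c" "admissible_chain P n c (concat gs) b"
    by (auto simp: admissible_chain_append)
  have h: "admissible_chain P n a h c \<and> pt_count P h \<le> pt_count P g
      \<and> (odd (pt_count P h) \<longleftrightarrow> odd (pt_count P g))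
      \<and> (pt_count P h < pt_count P g \<longleftrightarrow> interacting g \<and> 2 \<le> pt_count P g)"
    using hs(2) c(1) unfolding admissible_replacement_def by blast
  note ih = Cons.IH[OF hs(3) c(2)]
  have "admissible_chain P n a (concat hs) b"
    unfolding hs concat.simps admissible_chain_append using h ih by blast
  moreover have "pt_count P (concat hs) = pt_count P h + pt_count P (concat hs')"
    "pt_count P (concat (g # gs)) = pt_count P g + pt_count P (concat gs)"
    unfolding hs by simp_all
  ultimately show ?case using h ih by auto
qed simp

lemma concat_grp: "concat (grp X fs) = fs"
  by (induction fs) (auto split: list.split)

lemma step_ok_admissible:
  assumes S: "standing P" and fs: "admissible_chain P n a fs b" and st: "step_ok P n t0 t1 fs fs'"
  shows "admissible_chain P n a fs' b \<and> pt_count P fs' \<le> pt_count P fs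
     \<and> (odd (pt_count P fs') \<longleftrightarrow> odd (pt_count P fs))
     \<and> (pt_count P fs' < pt_count P fs \<longleftrightarrow>
          (\<exists>g\<in>set (grp (\<lambda>f. fpos t0 f t1) fs). interacting g \<and> 2 \<le> pt_count P g))"
proof -
  define X where "X = (\<lambda>f. fpos t0 f t1)"
  define gs where "gs = grp X fs"
  obtain Ls where Ls: "\<forall>i<length gs. interacting (gs ! i) \<longrightarrow>
            Rn_sol P n (fst (snd (hd (gs ! i)))) (snd (snd (last (gs ! i)))) (Ls ! i)"
    and fs': "fs' = concat (map (\<lambda>i. if interacting (gs ! i)
                               then fan_fronts (X (hd (gs ! i))) (Ls ! i)
                               else map (\<lambda>f. (X f, snd f)) (gs ! i)) [0..<length gs])"
    using st unfolding step_ok_def Let_def X_def gs_def by blast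
  have "list_all2 (admissible_replacement P n) gs (map (\<lambda>i. if interacting (gs ! i)
                               then fan_fronts (X (hd (gs ! i))) (Ls ! i)
                               else map (\<lambda>f. (X f, snd f)) (gs ! i)) [0..<length gs])"
    unfolding list_all2_conv_all_nth
    using Ls admissible_replacement_Rn_sol[OF S] admissible_replacement_moved by auto
  from admissible_replacement_concat[OF this] show ?thesis
    using fs unfolding fs' gs_def X_def concat_grp by blast
qed

section \<open>The initial datum\<close>

lemma length_filter_less_sorted:
  fixes ys :: "real list"
  assumes so: "sorted_wrt (<) ys" and i: "i \<le> length ys"
    and lo: "0 < i \<longrightarrow> ys ! (i - 1) < x" and hi: "i < length ys \<longrightarrow> x \<le> ys ! i"
  shows "length (filter (\<lambda>y. y < x) ys) = i"
proof -
  have "{j. j < length ys \<and> ys ! j < x} = {..<i}"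
  proof (intro set_eqI iffI)
    fix j assume "j \<in> {j. j < length ys \<and> ys ! j < x}"
    then have j: "j < length ys" "ys ! j < x" by auto
    show "j \<in> {..<i}"
    proof (rule ccontr)
      assume "j \<notin> {..<i}"
      then have "ys ! i \<le> ys ! j" using so j(1) sorted_wrt_nth_less[OF so, of i j]
        by (cases "i = j") auto
      then show False using hi j i \<open>j \<notin> {..<i}\<close> by auto
    qed
  next
    fix j assume "j \<in> {..<i}"
    then have "j < length ys" "j = i - 1 \<or> (j < i - 1 \<and> i - 1 < length ys)" using i by auto
    then have "ys ! j \<le> ys ! (i - 1)" using sorted_wrt_nth_less[OF so, of j "i - 1"] by auto
    then show "j \<in> {j. j < length ys \<and> ys ! j < x}" using lo \<open>j \<in> {..<i}\<close> \<open>j < length ys\<close> by auto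
  qed
  then show ?thesis unfolding length_filter_conv_card by simp
qed

lemma not_in_sorted_gap:
  fixes ys :: "real list"
  assumes so: "sorted_wrt (<) ys" and i: "i \<le> length ys"
    and lo: "0 < i \<longrightarrow> ys ! (i - 1) < y" and hi: "i < length ys \<longrightarrow> y < ys ! i"
  shows "y \<notin> set ys"
proof
  assume "y \<in> set ys"
  then obtain j where j: "j < length ys" "y = ys ! j" by (auto simp: in_set_conv_nth)
  show False
  proof (cases "j < i")
    case True
    then have "j = i - 1 \<or> (j < i - 1 \<and> i - 1 < length ys)" using i by auto
    then have "ys ! j \<le> ys ! (i - 1)" using sorted_wrt_nth_less[OF so, of j "i - 1"] by auto
    then show False using lo j True by auto
  next
    case False
    then have "ys ! i \<le> ys ! j" using j sorted_wrt_nth_less[OF so, of i j] by (cases "i = j") auto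
    then show False using hi j False by auto
  qed
qed

context
  fixes ubar :: "real \<Rightarrow> state" and ys :: "real list" and vs :: "state list"
  assumes so: "sorted_wrt (<) ys"
    and ubar: "\<forall>x. x \<notin> set ys \<longrightarrow> ubar x = vs ! length (filter (\<lambda>y. y < x) ys)"
begin

lemma ubar_in_gap:
  assumes "i \<le> length ys" "0 < i \<longrightarrow> ys ! (i - 1) < y" "i < length ys \<longrightarrow> y < ys ! i"
  shows "ubar y = vs ! i"
  using ubar not_in_sorted_gap[OF so assms] length_filter_less_sorted[OF so, of i y] assms
  by auto

lemma ubar_left_of:
  assumes i: "i \<le> length ys" and lo: "0 < i \<longrightarrow> ys ! (i - 1) < x" and hi: "i < length ys \<longrightarrow> x \<le> ys ! i"
    and d: "d > 0" and a: "\<forall>y. x - d < y \<and> y < x \<longrightarrow> ubar y = a"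
  shows "a = vs ! i"
proof -
  define g where "g = (if 0 < i then x - ys ! (i - 1) else 1)"
  have "g > 0" using lo unfolding g_def by auto
  define y where "y = x - min (d / 2) (g / 2)"
  have "x - d < y" "y < x" "x - g / 2 \<le> y" using d \<open>g > 0\<close> unfolding y_def by auto
  then show ?thesis
    using a ubar_in_gap[OF i, of y] lo hi unfolding g_def by (auto simp: field_simps split: if_splits)
qed

lemma ubar_right_of:
  assumes i: "i \<le> length ys" and lo: "0 < i \<longrightarrow> ys ! (i - 1) \<le> x" and hi: "i < length ys \<longrightarrow> x < ys ! i"
    and d: "d > 0" and b: "\<forall>y. x < y \<and> y < x + d \<longrightarrow> ubar y = b"
  shows "b = vs ! i"
proof -
  define g where "g = (if i < length ys then ys ! i - x else 1)"
  have "g > 0" using hi unfolding g_def by auto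
  define y where "y = x + min (d / 2) (g / 2)"
  have "x < y" "y < x + d" "y \<le> x + g / 2" using d \<open>g > 0\<close> unfolding y_def by auto
  then show ?thesis
    using b ubar_in_gap[OF i, of y] lo hi unfolding g_def by (auto simp: field_simps split: if_splits)
qed

lemma grid_state_vs:
  assumes S: "standing P" and O: "\<forall>x. ubar x \<in> Omega_n P n" and i: "i \<le> length ys"
  shows "grid_state P n (vs ! i)"
proof -
  define y where "y = (if i = 0 then ys ! 0 - 1 else if i = length ys then ys ! (i - 1) + 1
                       else (ys ! (i - 1) + ys ! i) / 2)"
  have "ys ! (i - 1) < ys ! i" if "0 < i" "i < length ys"
    using sorted_wrt_nth_less[OF so, of "i - 1" i] that by auto
  then have "ubar y = vs ! i" using i by (intro ubar_in_gap) (auto simp: y_def)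
  then show ?thesis using grid_state_Omega_n[OF S] O by metis
qed

lemma sorted_gap_index:
  "\<exists>i\<le>length ys. (0 < i \<longrightarrow> ys ! (i - 1) < x) \<and> (i < length ys \<longrightarrow> x \<le> ys ! i)"
proof -
  define Q where "Q = (\<lambda>i. i = length ys \<or> x \<le> ys ! i)"
  define i where "i = (LEAST i. Q i)"
  have "Q i" unfolding i_def by (rule LeastI[of Q "length ys"]) (simp add: Q_def)
  moreover have "i \<le> length ys" unfolding i_def by (rule Least_le) (simp add: Q_def)
  moreover have "0 < i \<longrightarrow> \<not> Q (i - 1)" using not_less_Least[of "i - 1" Q] i_def by auto
  ultimately show ?thesis unfolding Q_def by (intro exI[of _ i]) auto
qed

lemma pc_jump_ubar:
  assumes "pc_jump ubar x a b"
  shows "a = b \<or> (\<exists>i<length ys. x = ys ! i \<and> a = vs ! i \<and> b = vs ! Suc i)"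
proof -
  obtain d1 d2 where d1: "d1 > 0" "\<forall>y. x - d1 < y \<and> y < x \<longrightarrow> ubar y = a"
    and d2: "d2 > 0" "\<forall>y. x < y \<and> y < x + d2 \<longrightarrow> ubar y = b"
    using assms unfolding pc_jump_def by blast
  obtain i where i: "i \<le> length ys" "0 < i \<longrightarrow> ys ! (i - 1) < x" "i < length ys \<longrightarrow> x \<le> ys ! i"
    using sorted_gap_index by blast
  have a: "a = vs ! i" using ubar_left_of[OF i d1] .
  show ?thesis
  proof (cases "i < length ys \<and> x = ys ! i")
    case True
    have "Suc i < length ys \<longrightarrow> x < ys ! Suc i" using True sorted_wrt_nth_less[OF so, of i "Suc i"] by auto
    then have "b = vs ! Suc i" using ubar_right_of[of "Suc i" x, OF _ _ _ d2] True by auto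
    then show ?thesis using True a by auto
  next
    case False
    then have "b = vs ! i" using ubar_right_of[OF i(1) _ _ d2] i by auto
    then show ?thesis using a by simp
  qed
qed

lemma pc_jump_ubar_breakpoint:
  assumes i: "i < length ys"
  shows "pc_jump ubar (ys ! i) (vs ! i) (vs ! Suc i)"
proof -
  let ?x = "ys ! i"
  define d1 where "d1 = (if 0 < i then ?x - ys ! (i - 1) else 1)"
  define d2 where "d2 = (if Suc i < length ys then ys ! Suc i - ?x else 1)"
  have "d1 > 0" "d2 > 0"
    using sorted_wrt_nth_less[OF so, of "i - 1" i] sorted_wrt_nth_less[OF so, of i "Suc i"] i
    unfolding d1_def d2_def by auto
  moreover have "ubar y = vs ! i" if "?x - d1 < y" "y < ?x" for y
    by (rule ubar_in_gap) (use i that d1_def in auto)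
  moreover have "ubar y = vs ! Suc i" if "?x < y" "y < ?x + d2" for y
    by (rule ubar_in_gap) (use i that d2_def in auto)
  ultimately show ?thesis unfolding pc_jump_def by blast
qed

lemma card_phase_jumps_ubar:
  assumes S: "standing P"
  shows "card {x. \<exists>a b. pc_jump ubar x a b \<and> cross P a b}
       = card {i. i < length ys \<and> cross P (vs ! i) (vs ! Suc i)}"
proof -
  let ?I = "{i. i < length ys \<and> cross P (vs ! i) (vs ! Suc i)}"
  have no_self_cross: "\<not> cross P a a" for a
    unfolding cross_def using Omega_f_not_Omega_c[OF S] by blast
  have "{x. \<exists>a b. pc_jump ubar x a b \<and> cross P a b} = (\<lambda>i. ys ! i) ` ?I"
  proof (intro set_eqI iffI)
    fix x assume "x \<in> {x. \<exists>a b. pc_jump ubar x a b \<and> cross P a b}"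
    then obtain a b where "pc_jump ubar x a b" "cross P a b" by blast
    then show "x \<in> (\<lambda>i. ys ! i) ` ?I" using pc_jump_ubar no_self_cross by blast
  next
    fix x assume "x \<in> (\<lambda>i. ys ! i) ` ?I"
    then show "x \<in> {x. \<exists>a b. pc_jump ubar x a b \<and> cross P a b}"
      using pc_jump_ubar_breakpoint by blast
  qed
  moreover have "inj_on (\<lambda>i. ys ! i) ?I"
  proof (rule inj_onI)
    fix i j assume "i \<in> ?I" "j \<in> ?I" "ys ! i = ys ! j"
    then show "i = j" using sorted_wrt_nth_less[OF so, of i j] sorted_wrt_nth_less[OF so, of j i]
      by (metis less_irrefl nat_neq_iff mem_Collect_eq)
  qed
  ultimately show ?thesis by (simp add: card_image)
qed

end

section \<open>Counting phase transitions along the wave-front tracking\<close>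

lemma pt_count_Rn_sol:
  assumes S: "standing P" and a: "grid_state P n a" and b: "grid_state P n b"
    and R: "Rn_sol P n a b L"
  shows "pt_count P (fan_fronts x L) = (if cross P a b then 1 else 0)"
proof -
  have "admissible_chain P n a (fan_fronts x L) b" "pt_count P (fan_fronts x L) \<le> 1"
    using Rn_sol_admissible[OF S a b R] by auto
  moreover from this(1) have "odd (pt_count P (fan_fronts x L)) \<longleftrightarrow> cross P a b"
    using odd_pt_count_admissible_chain[OF S _ a b] by blast
  ultimately show ?thesis by (cases "pt_count P (fan_fronts x L)") auto
qed

lemma admissible_initial_fronts:
  assumes S: "standing P" and G: "\<forall>i\<le>length ys. grid_state P n (vs ! i)"
    and R: "\<forall>i<length ys. Rn_sol P n (vs ! i) (vs ! Suc i) (Ls ! i)" and m: "m \<le> length ys"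
  shows "admissible_chain P n (vs ! 0) (concat (map (\<lambda>i. fan_fronts (ys ! i) (Ls ! i)) [0..<m])) (vs ! m)
    \<and> pt_count P (concat (map (\<lambda>i. fan_fronts (ys ! i) (Ls ! i)) [0..<m]))
        = card {i. i < m \<and> cross P (vs ! i) (vs ! Suc i)}"
  using m
proof (induction m)
  case 0 then show ?case by (simp add: admissible_chain_def pt_count_def)
next
  case (Suc m)
  let ?F = "fan_fronts (ys ! m) (Ls ! m)"
  have g: "grid_state P n (vs ! m)" "grid_state P n (vs ! Suc m)" and r: "Rn_sol P n (vs ! m) (vs ! Suc m) (Ls ! m)"
    using G R Suc.prems by auto
  note ih = Suc.IH[OF Suc_leD[OF Suc.prems]]
  have "{i. i < Suc m \<and> cross P (vs ! i) (vs ! Suc i)} =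
     (if cross P (vs ! m) (vs ! Suc m) then insert m {i. i < m \<and> cross P (vs ! i) (vs ! Suc i)}
      else {i. i < m \<and> cross P (vs ! i) (vs ! Suc i)})" by (auto simp: less_Suc_eq)
  then have "card {i. i < Suc m \<and> cross P (vs ! i) (vs ! Suc i)}
      = card {i. i < m \<and> cross P (vs ! i) (vs ! Suc i)} + pt_count P ?F"
    using pt_count_Rn_sol[OF S g r] by simp
  moreover have "admissible_chain P n (vs ! 0) (concat (map (\<lambda>i. fan_fronts (ys ! i) (Ls ! i)) [0..<m]) @ ?F) (vs ! Suc m)"
    unfolding admissible_chain_append using ih Rn_sol_admissible[OF S g r] by blast
  ultimately show ?case using ih by simp
qed

lemma fronts_at_eq:
  assumes "strict_mono tau" and "tau k < t" "t \<le> tau (Suc k)"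
  shows "fronts_at tau C t = C k"
proof -
  have "(LEAST j. t \<le> tau (Suc j)) = k"
  proof (rule Least_equality)
    fix j assume "t \<le> tau (Suc j)"
    then show "k \<le> j" using assms strict_mono_less_eq[OF assms(1), of "Suc j" k] by fastforce
  qed (rule assms(3))
  then show ?thesis unfolding fronts_at_def by simp
qed

lemma unbounded_time_step:
  fixes tau :: "nat \<Rightarrow> real"
  assumes "tau 0 = 0" and "filterlim tau at_top sequentially" and "0 < t"
  shows "\<exists>k. tau k < t \<and> t \<le> tau (Suc k)"
proof -
  obtain j where j: "t \<le> tau j"
    using assms(2) unfolding filterlim_at_top eventually_sequentially by blast
  define m where "m = (LEAST j. t \<le> tau j)"
  have m: "t \<le> tau m" unfolding m_def by (rule LeastI[of _ j]) (rule j)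
  then have "m \<noteq> 0" using assms(1,3) by (cases "m = 0") auto
  moreover have "\<not> t \<le> tau (m - 1)"
    using not_less_Least[of "m - 1" "\<lambda>j. t \<le> tau j"] \<open>m \<noteq> 0\<close> m_def by simp
  ultimately show ?thesis using m by (intro exI[of _ "m - 1"]) auto
qed

lemma strict_drop_right_iff:
  fixes F :: "real \<Rightarrow> 'a::linorder"
  assumes "t < T" and "\<And>s. t < s \<Longrightarrow> s \<le> T \<Longrightarrow> F s = c"
  shows "(\<exists>d>0. \<forall>s. t < s \<and> s < t + d \<longrightarrow> F s < F t) \<longleftrightarrow> c < F t"
proof
  assume "\<exists>d>0. \<forall>s. t < s \<and> s < t + d \<longrightarrow> F s < F t"
  then obtain d where d: "d > 0" "\<forall>s. t < s \<and> s < t + d \<longrightarrow> F s < F t" by blast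
  obtain e where e: "0 < e" "e \<le> d" "e \<le> T - t" using d(1) assms(1)
    by (intro that[of "min d (T - t)"]) auto
  then have "t < t + e / 2" "t + e / 2 < t + d" "t + e / 2 \<le> T" by auto
  then show "c < F t" using d(2) assms(2) by metis
next
  assume "c < F t"
  then show "\<exists>d>0. \<forall>s. t < s \<and> s < t + d \<longrightarrow> F s < F t"
    using assms by (intro exI[of _ "T - t"]) auto
qed

lemma antitone_parity_chain:
  fixes N :: "nat \<Rightarrow> nat"
  assumes N: "\<And>k. N (Suc k) \<le> N k \<and> (odd (N (Suc k)) \<longleftrightarrow> odd (N k))" and "k \<le> j"
  shows "N j \<le> N k \<and> (odd (N j) \<longleftrightarrow> odd (N k))"
  using assms(2)
proof (induction j rule: dec_induct)
  case (step j) then show ?case using N[of j] by auto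
qed simp

context
  fixes tau :: "nat \<Rightarrow> real" and F :: "real \<Rightarrow> nat" and N :: "nat \<Rightarrow> nat"
  assumes tau: "tau 0 = 0" "strict_mono tau" "filterlim tau at_top sequentially"
    and F_step: "\<And>k t. tau k < t \<Longrightarrow> t \<le> tau (Suc k) \<Longrightarrow> F t = N k"
begin

lemma piecewise_count_antitone_parity:
  assumes F0: "F 0 = N 0" and N: "\<And>k. N (Suc k) \<le> N k \<and> (odd (N (Suc k)) \<longleftrightarrow> odd (N k))"
    and ts: "0 \<le> t" "t \<le> s"
  shows "F s \<le> F t \<and> even (F t - F s)"
proof -
  have step_of: "\<exists>k. F r = N k \<and> (0 < r \<longrightarrow> tau k < r \<and> r \<le> tau (Suc k)) \<and> (r = 0 \<longrightarrow> k = 0)"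
    if "0 \<le> r" for r
  proof (cases "r = 0")
    case False
    then show ?thesis using unbounded_time_step[OF tau(1,3)] F_step that by force
  qed (use F0 in auto)
  obtain k where k: "F t = N k" "0 < t \<longrightarrow> tau k < t \<and> t \<le> tau (Suc k)" "t = 0 \<longrightarrow> k = 0"
    using step_of ts by blast
  have "0 \<le> s" using ts by linarith
  then obtain j where j: "F s = N j" "0 < s \<longrightarrow> tau j < s \<and> s \<le> tau (Suc j)" "s = 0 \<longrightarrow> j = 0"
    using step_of by blast
  have "k \<le> j"
  proof (cases "t = 0")
    case False
    then have "0 < t" "0 < s" using ts by auto
    then have "tau k < tau (Suc j)" using k(2) j(2) ts(2) by linarith
    then show ?thesis by (simp add: strict_mono_less[OF tau(2)])
  qed (use k in simp)
  then show ?thesis using antitone_parity_chain[of N, OF N] k j by (auto simp: even_diff_nat)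
qed

lemma piecewise_count_drop_iff:
  assumes "0 < t"
  shows "(\<exists>d>0. \<forall>s. t < s \<and> s < t + d \<longrightarrow> F s < F t) \<longleftrightarrow> (\<exists>k. tau (Suc k) = t \<and> N (Suc k) < N k)"
proof -
  obtain k where k: "tau k < t" "t \<le> tau (Suc k)" using unbounded_time_step[OF tau(1,3) assms] by blast
  have Ft: "F t = N k" using F_step[OF k] .
  show ?thesis
  proof (cases "t = tau (Suc k)")
    case True
    have "tau (Suc k') = t \<longleftrightarrow> k' = k" for k'
      using True by (simp add: strict_mono_eq[OF tau(2)])
    then have "(\<exists>k'. tau (Suc k') = t \<and> N (Suc k') < N k') \<longleftrightarrow> N (Suc k) < N k" by auto
    moreover have "t < tau (Suc (Suc k))" using True strict_mono_less[OF tau(2)] by simp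
    ultimately show ?thesis
      using strict_drop_right_iff[of t _ F "N (Suc k)"] F_step[of "Suc k"] True Ft by simp
  next
    case False
    have "\<not> (tau (Suc k') = t)" for k'
    proof
      assume "tau (Suc k') = t"
      then have "tau k < tau (Suc k')" "tau (Suc k') < tau (Suc k)" using k False by auto
      then show False by (simp add: strict_mono_less[OF tau(2)])
    qed
    then show ?thesis
      using strict_drop_right_iff[of t "tau (Suc k)" F "N k"] F_step[of k] k False Ft by auto
  qed
qed

end

lemma NPT_between_steps:
  assumes "tau 0 = 0" "strict_mono tau" "tau k < t" "t \<le> tau (Suc k)"
  shows "NPT P ubar tau C t = pt_count P (C k)"
proof -
  have "0 \<le> tau k" using assms(1,2) strict_mono_less_eq[OF assms(2), of 0 k] by simp
  then show ?thesis
    using fronts_at_eq[OF assms(2-4)] assms(3) unfolding NPT_def pt_count_def by simp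
qed

context
  fixes P :: prm and n :: nat and ubar :: "real \<Rightarrow> state"
    and ys :: "real list" and vs :: "state list"
    and tau :: "nat \<Rightarrow> real" and C :: "nat \<Rightarrow> front list"
  assumes S: "standing P"
    and O: "\<forall>x. ubar x \<in> Omega_n P n"
    and so: "sorted_wrt (<) ys"
    and ubar: "\<forall>x. x \<notin> set ys \<longrightarrow> ubar x = vs ! length (filter (\<lambda>y. y < x) ys)"
    and wft: "wft P n ys vs tau C"
begin

lemma wft_initial:
  "admissible_chain P n (vs ! 0) (C 0) (vs ! length ys) \<and> NPT P ubar tau C 0 = pt_count P (C 0)"
proof -
  obtain Ls where R: "\<forall>i<length ys. Rn_sol P n (vs ! i) (vs ! Suc i) (Ls ! i)"
    and C0: "C 0 = concat (map (\<lambda>i. fan_fronts (ys ! i) (Ls ! i)) [0..<length ys])"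
    using wft unfolding wft_def by blast
  have "\<forall>i\<le>length ys. grid_state P n (vs ! i)" using grid_state_vs[OF so ubar S O] by blast
  then show ?thesis
    using admissible_initial_fronts[OF S _ R order.refl] card_phase_jumps_ubar[OF so ubar S]
    unfolding C0 NPT_def by simp
qed

lemma wft_admissible: "admissible_chain P n (vs ! 0) (C k) (vs ! length ys)"
proof (induction k)
  case 0 then show ?case using wft_initial by simp
next
  case (Suc k) then show ?case using step_ok_admissible[OF S] wft unfolding wft_def by blast
qed

lemma wft_pt_count_step:
  "pt_count P (C (Suc k)) \<le> pt_count P (C k)
   \<and> (odd (pt_count P (C (Suc k))) \<longleftrightarrow> odd (pt_count P (C k)))
   \<and> (pt_count P (C (Suc k)) < pt_count P (C k) \<longleftrightarrow>
        (\<exists>g\<in>set (grp (\<lambda>f. fpos (tau k) f (tau (Suc k))) (C k)). interacting g \<and> 2 \<le> pt_count P g))"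
  using step_ok_admissible[OF S wft_admissible] wft unfolding wft_def by blast

lemma PT_interact_iff:
  "PT_interact P tau C t \<longleftrightarrow> (\<exists>k. tau (Suc k) = t \<and> pt_count P (C (Suc k)) < pt_count P (C k))"
  using wft_pt_count_step unfolding PT_interact_def pt_count_def by blast

end

theorem lemma2:
  fixes P :: prm and n :: nat and ubar :: "real \<Rightarrow> state"
    and ys :: "real list" and vs :: "state list"
    and tau :: "nat \<Rightarrow> real" and C :: "nat \<Rightarrow> front list"
  assumes "standing P"
    and "\<forall>x. ubar x \<in> Omega_n P n"
    and "sorted_wrt (<) ys" and "length vs = Suc (length ys)"
    and "\<forall>x. x \<notin> set ys \<longrightarrow> ubar x = vs ! length (filter (\<lambda>y. y < x) ys)"
    and "wft P n ys vs tau C"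
  shows "(\<forall>t>0. \<forall>f\<in>set (fronts_at tau C t).
            isPT P f \<longrightarrow> (fst (snd f), snd (snd f)) \<in> Ge P)
       \<and> (\<forall>t s. 0 \<le> t \<and> t \<le> s \<longrightarrow> NPT P ubar tau C s \<le> NPT P ubar tau C t)
       \<and> (\<forall>t>0. (\<exists>d>0. \<forall>s. t < s \<and> s < t + d \<longrightarrow> NPT P ubar tau C s < NPT P ubar tau C t)
                 \<longleftrightarrow> PT_interact P tau C t)
       \<and> (\<forall>t s. 0 \<le> t \<and> t \<le> s \<longrightarrow> even (NPT P ubar tau C t - NPT P ubar tau C s))"
proof -
  note setting = assms(1,2,3,5,6)
  have tau: "tau 0 = 0" "strict_mono tau" "filterlim tau at_top sequentially"
    using assms(6) unfolding wft_def by auto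
  have NPT_step: "\<And>k t. tau k < t \<Longrightarrow> t \<le> tau (Suc k) \<Longrightarrow> NPT P ubar tau C t = pt_count P (C k)"
    using NPT_between_steps[OF tau(1,2)] by blast
  note antitone = piecewise_count_antitone_parity[where F = "NPT P ubar tau C"
      and N = "\<lambda>k. pt_count P (C k)", OF tau]
  note drop = piecewise_count_drop_iff[where F = "NPT P ubar tau C"
      and N = "\<lambda>k. pt_count P (C k)", OF tau]
  have "\<forall>t>0. \<forall>f\<in>set (fronts_at tau C t). isPT P f \<longrightarrow> (fst (snd f), snd (snd f)) \<in> Ge P"
    using unbounded_time_step[OF tau(1,3)] fronts_at_eq[OF tau(2)] wft_admissible[OF setting]
    unfolding admissible_chain_def by metis
  moreover have "NPT P ubar tau C s \<le> NPT P ubar tau C t \<and> even (NPT P ubar tau C t - NPT P ubar tau C s)"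
    if "0 \<le> t" "t \<le> s" for t s
    using antitone NPT_step that wft_initial[OF setting] wft_pt_count_step[OF setting] by blast
  moreover have "(\<exists>d>0. \<forall>s. t < s \<and> s < t + d \<longrightarrow> NPT P ubar tau C s < NPT P ubar tau C t)
                 \<longleftrightarrow> PT_interact P tau C t" if "0 < t" for t
    using drop NPT_step that PT_interact_iff[OF setting] by blast
  ultimately show ?thesis by blast
qed
end
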